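(* Let $D^*=B(0,1)\setminus\{0\}\subseteq\mathbb{C}$ be the punctured unit disc. Then $D^*$ has the property $\widetilde{\Omega}_\zeta$ for every $\zeta\in D^*$, but the Fréchet space $\mathcal{O}(D^* )$ does not have the property $\widetilde{\Omega}$.
   Context: $\mathcal{O}(M)$ denotes the Fréchet space of holomorphic functions on $M$ with the compact-open topology. Property $\widetilde{\Omega}$ of a Fréchet space $\mathcal{X}$ with an increasing fundamental system of seminorms and closed unit balls $\mathcal{U}_k$: for every $k_0$ there exist $k_1$ and $\lambda>0$ such that for every $k>k_1$ there is $C>0$ with $\mathcal{U}_{k_1}\subseteq\frac{C}{r}\mathcal{U}_{k_0}+r^\lambda\mathcal{U}_k$ for all $r>0$ (a linear topological invariant). Property $\widetilde{\Omega}_z$ of a Stein manifold $M$ at $z$: for an increasing generating norm system of $\mathcal{O}(M)$ with unit balls $\mathcal{U}_k$, there is a coordinate ball $B(z;\varepsilon)\subset\subset M$ such that with $\mathcal{U}_0=\{f\in\mathcal{O}(M):\sup_{B(z;\varepsilon)}|f|\le1\}$: $\exists k_1,\lambda>0\ \forall k>k_1\ \exists C>0$ with $\mathcal{U}_{k_1}\subseteq\frac{C}{r}\mathcal{U}_0+r^\lambda\mathcal{U}_k$ for all $r>0$. *)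

theory Defs
  imports "HOL-Analysis.Analysis"
begin

text \<open>Elements are represented by total functions holomorphic on M; all seminorms considered
  below are continuous for the compact-open topology and hence only depend on values on M.\<close>
definition holo_space :: "complex set \<Rightarrow> (complex \<Rightarrow> complex) set" where
  "holo_space M = {f. f holomorphic_on M}"

definition seminorm_on :: "complex set \<Rightarrow> ((complex \<Rightarrow> complex) \<Rightarrow> real) \<Rightarrow> bool" where
  "seminorm_on M p \<longleftrightarrow>
     (\<forall>f\<in>holo_space M. 0 \<le> p f) \<and>
     (\<forall>f\<in>holo_space M. \<forall>g\<in>holo_space M. p (\<lambda>z. f z + g z) \<le> p f + p g) \<and>
     (\<forall>f\<in>holo_space M. \<forall>c::complex. p (\<lambda>z. c * f z) = cmod c * p f)"

text \<open>An increasing fundamental system of (continuous) seminorms for the compact-open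
  topology on O(M).\<close>
definition fund_seminorm_sys :: "complex set \<Rightarrow> (nat \<Rightarrow> (complex \<Rightarrow> complex) \<Rightarrow> real) \<Rightarrow> bool" where
  "fund_seminorm_sys M p \<longleftrightarrow>
     (\<forall>k. seminorm_on M (p k)) \<and>
     (\<forall>k. \<forall>f\<in>holo_space M. p k f \<le> p (Suc k) f) \<and>
     (\<forall>k. \<exists>K C. compact K \<and> K \<subseteq> M \<and>
          (\<forall>f\<in>holo_space M. (\<forall>z\<in>K. cmod (f z) \<le> 1) \<longrightarrow> p k f \<le> C)) \<and>
     (\<forall>K. compact K \<and> K \<subseteq> M \<longrightarrow> (\<exists>k C.
          \<forall>f\<in>holo_space M. p k f \<le> 1 \<longrightarrow> (\<forall>z\<in>K. cmod (f z) \<le> C)))"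

definition fund_norm_sys :: "complex set \<Rightarrow> (nat \<Rightarrow> (complex \<Rightarrow> complex) \<Rightarrow> real) \<Rightarrow> bool" where
  "fund_norm_sys M p \<longleftrightarrow> fund_seminorm_sys M p \<and>
     (\<forall>k. \<forall>f\<in>holo_space M. p k f = 0 \<longrightarrow> (\<forall>z\<in>M. f z = 0))"

text \<open>Property Omega-tilde of O(M), expressed with respect to the seminorm system p
  (unit balls U_k = {f. p k f \<le> 1}); note (C/r) U_k0 = {g. p k0 g \<le> C/r} for C, r > 0.\<close>
definition omega_tilde_wrt :: "complex set \<Rightarrow> (nat \<Rightarrow> (complex \<Rightarrow> complex) \<Rightarrow> real) \<Rightarrow> bool" where
  "omega_tilde_wrt M p \<longleftrightarrow>
     (\<forall>k0. \<exists>k1. \<exists>lam>0. \<forall>k>k1. \<exists>C>0. \<forall>r>0.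
        \<forall>f\<in>holo_space M. p k1 f \<le> 1 \<longrightarrow>
          (\<exists>g\<in>holo_space M. \<exists>h\<in>holo_space M. f = (\<lambda>z. g z + h z) \<and>
             p k0 g \<le> C / r \<and> p k h \<le> r powr lam))"

text \<open>Property Omega-tilde at z of M, with respect to the norm system p: U_0 is the unit
  ball of the sup norm over a coordinate ball B(z;eps) compactly contained in M.\<close>
definition omega_tilde_at_wrt :: "complex set \<Rightarrow> complex \<Rightarrow> (nat \<Rightarrow> (complex \<Rightarrow> complex) \<Rightarrow> real) \<Rightarrow> bool" where
  "omega_tilde_at_wrt M z p \<longleftrightarrow>
     (\<exists>eps>0. cball z eps \<subseteq> M \<and>
       (\<exists>k1. \<exists>lam>0. \<forall>k>k1. \<exists>C>0. \<forall>r>0.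
          \<forall>f\<in>holo_space M. p k1 f \<le> 1 \<longrightarrow>
            (\<exists>g\<in>holo_space M. \<exists>h\<in>holo_space M. f = (\<lambda>w. g w + h w) \<and>
               (\<forall>w\<in>ball z eps. cmod (g w) \<le> C / r) \<and> p k h \<le> r powr lam)))"

end

theory Submission
  imports Defs "HOL-Complex_Analysis.Complex_Analysis"
begin

text \<open>
  Property \<open>\<Omega>\<close>-tilde at \<open>\<zeta>\<close>: a function in \<open>U\<^sub>k\<^sub>1\<close> is bounded on a disc \<open>B(\<zeta>, R)\<close> in \<open>M\<close>.
  Cutting its Taylor series at \<open>\<zeta>\<close> after degree \<open>N \<approx> log\<^sub>2 r\<close> leaves a tail of size \<open>O(1/r)\<close>
  on \<open>B(\<zeta>, R/2)\<close>, while the Taylor polynomial is bounded on the bounded set \<open>M\<close> by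
  \<open>O((2D/R)\<^sup>N)\<close>, a fixed power of \<open>r\<close>.

  Failure of \<open>\<Omega>\<close>-tilde: the coefficient \<open>c\<close> of \<open>c z\<^sup>-\<^sup>n\<^sup>-\<^sup>1\<close> is recovered by integrating
  against \<open>z\<^sup>n\<close> over any circle \<open>|z| = s\<close>. For a splitting \<open>c z\<^sup>-\<^sup>n\<^sup>-\<^sup>1 = g + h\<close> we may integrate
  \<open>g\<close> over \<open>|z| = 1/2\<close> and \<open>h\<close> over a small circle \<open>|z| = \<rho>\<close>, which gives
  \<open>|c| \<le> sup |g| 2\<^sup>-\<^sup>n\<^sup>-\<^sup>1 + sup |h| \<rho>\<^sup>n\<^sup>+\<^sup>1\<close>. Functions with \<open>|c| = a\<^sup>n\<^sup>+\<^sup>1\<close> lie in a fixed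
  \<open>U\<^sub>k\<^sub>1\<close>; taking \<open>r \<sim> (2a)\<^sup>-\<^sup>n\<close> and \<open>\<rho>\<close> small compared to \<open>(2a)\<^sup>\<lambda>\<close> makes both terms
  smaller than \<open>|c|\<close> for large \<open>n\<close>.
\<close>

section \<open>Fundamental systems of seminorms\<close>

lemma holo_space_cmult: "f \<in> holo_space M \<Longrightarrow> (\<lambda>z. c * f z) \<in> holo_space M"
  unfolding holo_space_def by (auto intro!: holomorphic_intros)

lemma holo_space_zero: "(\<lambda>z. 0) \<in> holo_space M"
  unfolding holo_space_def by simp

lemma seminorm_on_cmult:
  assumes "seminorm_on M p" "f \<in> holo_space M"
  shows "p (\<lambda>z. c * f z) = cmod c * p f"
  using assms unfolding seminorm_on_def by blast

lemma seminorm_on_zero: "seminorm_on M p \<Longrightarrow> p (\<lambda>z. 0) = 0"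
  using seminorm_on_cmult[OF _ holo_space_zero, of M p 0] by simp

lemma fund_seminorm_sys_seminorm: "fund_seminorm_sys M p \<Longrightarrow> seminorm_on M (p k)"
  by (simp add: fund_seminorm_sys_def)

lemma fund_seminorm_sys_mono:
  assumes fs: "fund_seminorm_sys M p" and f: "f \<in> holo_space M" and "k \<le> k'"
  shows "p k f \<le> p k' f"
proof -
  have "incseq (\<lambda>j. p j f)"
    by (intro incseq_SucI) (use fs f in \<open>simp add: fund_seminorm_sys_def\<close>)
  then show ?thesis using \<open>k \<le> k'\<close> by (simp add: incseq_def)
qed

lemma fund_seminorm_sys_le_sup:
  assumes fs: "fund_seminorm_sys M p"
  obtains K C where "compact K" "K \<subseteq> M"
    "\<And>f B. f \<in> holo_space M \<Longrightarrow> 0 < B \<Longrightarrow> (\<forall>z\<in>K. cmod (f z) \<le> B) \<Longrightarrow> p k f \<le> C * B"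
proof -
  note fs[unfolded fund_seminorm_sys_def, THEN conjunct2, THEN conjunct2, THEN conjunct1, THEN spec[of _ k]]
  then obtain K C where K: "compact K" "K \<subseteq> M"
    and unit: "\<forall>f\<in>holo_space M. (\<forall>z\<in>K. cmod (f z) \<le> 1) \<longrightarrow> p k f \<le> C"
    by blast
  have sn: "seminorm_on M (p k)" using fs by (rule fund_seminorm_sys_seminorm)
  show ?thesis
  proof (rule that[OF K])
    fix f B assume f: "f \<in> holo_space M" and B: "0 < B" and bound: "\<forall>z\<in>K. cmod (f z) \<le> B"
    have "\<forall>z\<in>K. cmod (f z / B) \<le> 1" using bound B by (simp add: norm_divide)
    then have "p k (\<lambda>z. (1/B) * f z) \<le> C"
      using mp[OF bspec[OF unit holo_space_cmult[OF f, of "1/B"]]] by simp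
    moreover have "p k (\<lambda>z. (1/B) * f z) = p k f / B"
      using seminorm_on_cmult[OF sn f, of "1/B"] B by (simp add: norm_divide)
    ultimately show "p k f \<le> C * B" using B by (simp add: divide_le_eq)
  qed
qed

lemma sup_le_fund_seminorm_sys:
  assumes fs: "fund_seminorm_sys M p" and K: "compact K" "K \<subseteq> M"
  obtains k C where "0 < C"
    "\<And>f s z. f \<in> holo_space M \<Longrightarrow> 0 < s \<Longrightarrow> p k f \<le> s \<Longrightarrow> z \<in> K \<Longrightarrow> cmod (f z) \<le> C * s"
proof -
  note fs[unfolded fund_seminorm_sys_def, THEN conjunct2, THEN conjunct2, THEN conjunct2, THEN spec[of _ K]]
  then obtain k C where unit: "\<forall>f\<in>holo_space M. p k f \<le> 1 \<longrightarrow> (\<forall>z\<in>K. cmod (f z) \<le> C)"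
    using K by blast
  have sn: "seminorm_on M (p k)" using fs by (rule fund_seminorm_sys_seminorm)
  show ?thesis
  proof (rule that[of "max C 1" k])
    fix f s z assume f: "f \<in> holo_space M" and s: "0 < s" "p k f \<le> s" and z: "z \<in> K"
    have "p k (\<lambda>z. (1/s) * f z) \<le> 1"
      using seminorm_on_cmult[OF sn f, of "1/s"] s by (simp add: norm_divide)
    then have "cmod ((1/s) * f z) \<le> C" using unit holo_space_cmult[OF f, of "1/s"] z by blast
    then have "cmod (f z) \<le> C * s" using s by (simp add: norm_divide divide_le_eq)
    also have "\<dots> \<le> max C 1 * s" using s by (intro mult_right_mono) auto
    finally show "cmod (f z) \<le> max C 1 * s" .
  qed simp
qed

section \<open>Taylor polynomials of bounded holomorphic functions\<close>

definition taylor_polynomial :: "(complex \<Rightarrow> complex) \<Rightarrow> complex \<Rightarrow> nat \<Rightarrow> complex \<Rightarrow> complex" where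
  "taylor_polynomial f \<zeta> N w = (\<Sum>m\<le>N. (deriv ^^ m) f \<zeta> / fact m * (w - \<zeta>)^m)"

lemma taylor_polynomial_holomorphic: "taylor_polynomial f \<zeta> N holomorphic_on S"
  unfolding taylor_polynomial_def by (intro holomorphic_intros)

lemma taylor_coefficient_bound:
  assumes holf: "f holomorphic_on cball \<zeta> R" and R: "0 < R"
    and bound: "\<forall>z\<in>cball \<zeta> R. cmod (f z) \<le> B"
  shows "cmod ((deriv ^^ m) f \<zeta> / fact m) \<le> B / R^m"
proof -
  have "cmod ((deriv ^^ m) f \<zeta>) \<le> fact m * B / R^m"
  proof (rule Cauchy_inequality[OF _ _ R])
    show "f holomorphic_on ball \<zeta> R" using holf ball_subset_cball by (rule holomorphic_on_subset)
    show "continuous_on (cball \<zeta> R) f" using holf by (rule holomorphic_on_imp_continuous_on)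
    show "cmod (f x) \<le> B" if "cmod (\<zeta> - x) = R" for x using that bound by (simp add: dist_norm)
  qed
  then show ?thesis by (simp add: norm_divide field_simps)
qed

lemma taylor_remainder_bound:
  assumes holf: "f holomorphic_on cball \<zeta> R" and R: "0 < R"
    and bound: "\<forall>z\<in>cball \<zeta> R. cmod (f z) \<le> B" and w: "w \<in> ball \<zeta> (R/2)"
  shows "cmod (f w - taylor_polynomial f \<zeta> N w) \<le> B / 2^N"
proof -
  define u where "u m = (deriv ^^ m) f \<zeta> / fact m * (w - \<zeta>)^m" for m
  have "w \<in> ball \<zeta> R" using w R by auto
  then have "u sums f w"
    unfolding u_def by (rule holomorphic_power_series[OF holomorphic_on_subset[OF holf ball_subset_cball]])
  then have tail: "(\<lambda>i. u (i + Suc N)) sums (f w - taylor_polynomial f \<zeta> N w)"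
    using sums_split_initial_segment[of u "f w" "Suc N"]
    unfolding taylor_polynomial_def u_def lessThan_Suc_atMost by simp
  have w_near: "cmod (w - \<zeta>) \<le> R/2" using w by (simp add: dist_norm norm_minus_commute)
  have "0 \<le> B" using order_trans[OF norm_ge_zero bspec[OF bound, of \<zeta>]] R by simp
  have term_bound: "cmod (u (i + Suc N)) \<le> B / 2^Suc N * (1/2)^i" for i
  proof -
    let ?j = "i + Suc N"
    have "cmod (u ?j) \<le> B / R^?j * (R/2)^?j"
      unfolding u_def norm_mult norm_power
      using taylor_coefficient_bound[OF holf R bound, of ?j] w_near R \<open>0 \<le> B\<close>
      by (intro mult_mono power_mono) auto
    also have "\<dots> = B / 2^Suc N * (1/2)^i" using R by (simp add: power_divide power_add field_simps)
    finally show ?thesis .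
  qed
  have geometric: "(\<lambda>i. B / 2^Suc N * (1/2)^i) sums (B / 2^N)"
    using sums_mult[OF geometric_sums[of "1/2::real"], of "B / 2^Suc N"] by simp
  have "cmod (\<Sum>i. u (i + Suc N)) \<le> (\<Sum>i. B / 2^Suc N * (1/2)^i)"
    by (rule norm_suminf_le[OF term_bound sums_summable[OF geometric]])
  then show ?thesis using sums_unique[OF tail] sums_unique[OF geometric] by simp
qed

lemma sum_power_le_double_power:
  fixes T :: real assumes "1 \<le> T"
  shows "(\<Sum>m\<le>N. T^m) \<le> (2*T)^N"
proof -
  have "(\<Sum>m\<le>N. T^m) \<le> (\<Sum>m\<le>N. T^N)" using assms by (intro sum_mono power_increasing) auto
  also have "\<dots> = real (Suc N) * T^N" by simp
  also have "\<dots> \<le> 2^N * T^N"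
  proof (rule mult_right_mono)
    have "Suc N \<le> 2^N" using less_exp[of N] by (simp add: Suc_le_eq)
    then show "real (Suc N) \<le> 2^N" by (metis of_nat_le_iff of_nat_numeral of_nat_power)
  qed (use assms in simp)
  finally show ?thesis by (simp add: power_mult_distrib)
qed

lemma taylor_polynomial_bound:
  assumes holf: "f holomorphic_on cball \<zeta> R" and R: "0 < R" "R \<le> D"
    and bound: "\<forall>z\<in>cball \<zeta> R. cmod (f z) \<le> B" and z: "cmod (z - \<zeta>) \<le> D"
  shows "cmod (taylor_polynomial f \<zeta> N z) \<le> B * (2*D/R)^N"
proof -
  have "0 \<le> B" using order_trans[OF norm_ge_zero bspec[OF bound, of \<zeta>]] R by simp
  have "cmod (taylor_polynomial f \<zeta> N z) \<le> (\<Sum>m\<le>N. B * (D/R)^m)"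
    unfolding taylor_polynomial_def
  proof (rule order_trans[OF norm_sum sum_mono])
    fix m
    have "cmod ((deriv ^^ m) f \<zeta> / fact m * (z - \<zeta>)^m) \<le> B / R^m * D^m"
      unfolding norm_mult norm_power
      using taylor_coefficient_bound[OF holf R(1) bound] z R \<open>0 \<le> B\<close>
      by (intro mult_mono power_mono) auto
    then show "cmod ((deriv ^^ m) f \<zeta> / fact m * (z - \<zeta>)^m) \<le> B * (D/R)^m"
      by (simp add: power_divide)
  qed
  also have "\<dots> = B * (\<Sum>m\<le>N. (D/R)^m)" by (simp add: sum_distrib_left)
  also have "\<dots> \<le> B * (2*(D/R))^N"
    using R \<open>0 \<le> B\<close> by (intro mult_left_mono sum_power_le_double_power) auto
  finally show ?thesis by simp
qed

lemma two_power_between: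
  fixes r :: real assumes "1 \<le> r"
  obtains N :: nat where "r \<le> 2^N" "2^N \<le> 2*r"
proof
  define N where "N = nat \<lceil>log 2 r\<rceil>"
  have "0 \<le> log 2 r" using assms by simp
  then have N: "log 2 r \<le> real N" "real N \<le> log 2 r + 1" unfolding N_def by linarith+
  have "r = 2 powr log 2 r" using assms by simp
  also have "\<dots> \<le> 2 powr real N" using N by (intro powr_mono) auto
  finally show "r \<le> 2^N" by (simp add: powr_realpow)
  have "2 powr real N \<le> 2 powr (log 2 r + 1)" using N by (intro powr_mono) auto
  also have "\<dots> = 2 * r" using assms by (simp add: powr_add)
  finally show "2^N \<le> 2*r" by (simp add: powr_realpow)
qed

lemma power_eq_two_power_powr_log:
  fixes T :: real assumes "0 < T"
  shows "T^N = (2^N) powr log 2 T"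
proof -
  have "(2^N) powr log 2 T = (2 powr log 2 T) powr real N"
    by (simp add: powr_realpow[symmetric] powr_powr mult.commute)
  also have "\<dots> = T^N" using assms by (simp add: powr_realpow)
  finally show ?thesis by simp
qed

lemma taylor_polynomial_approximation:
  assumes holf: "f holomorphic_on cball \<zeta> R" and R: "0 < R" "R \<le> D"
    and bound: "\<forall>z\<in>cball \<zeta> R. cmod (f z) \<le> B" and r: "1 \<le> r"
  obtains N where
    "\<And>w. w \<in> ball \<zeta> (R/2) \<Longrightarrow> cmod (f w - taylor_polynomial f \<zeta> N w) \<le> B / r"
    "\<And>z. z \<in> cball \<zeta> D \<Longrightarrow> cmod (taylor_polynomial f \<zeta> N z) \<le> B * (2*r) powr log 2 (2*D/R)"
proof -
  obtain N where N: "r \<le> 2^N" "2^N \<le> 2*r" using two_power_between[OF r] .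
  have "0 \<le> B" using order_trans[OF norm_ge_zero bspec[OF bound, of \<zeta>]] R by simp
  show ?thesis
  proof (rule that[of N])
    fix w assume "w \<in> ball \<zeta> (R/2)"
    then have "cmod (f w - taylor_polynomial f \<zeta> N w) \<le> B / 2^N"
      by (rule taylor_remainder_bound[OF holf R(1) bound])
    also have "\<dots> \<le> B / r" using \<open>0 \<le> B\<close> N r by (intro divide_left_mono) auto
    finally show "cmod (f w - taylor_polynomial f \<zeta> N w) \<le> B / r" .
  next
    fix z assume "z \<in> cball \<zeta> D"
    then have "cmod (z - \<zeta>) \<le> D" by (simp add: dist_norm norm_minus_commute)
    then have "cmod (taylor_polynomial f \<zeta> N z) \<le> B * (2*D/R)^N"
      by (rule taylor_polynomial_bound[OF holf R bound])
    also have "\<dots> \<le> B * (2*r) powr log 2 (2*D/R)"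
    proof (rule mult_left_mono[OF _ \<open>0 \<le> B\<close>])
      have "1 \<le> 2*D/R" using R by (simp add: field_simps)
      then have "0 \<le> log 2 (2*D/R)" by simp
      have "(2*D/R)^N = (2^N) powr log 2 (2*D/R)"
        using R by (intro power_eq_two_power_powr_log) auto
      also have "\<dots> \<le> (2*r) powr log 2 (2*D/R)"
        using N \<open>0 \<le> log 2 (2*D/R)\<close> by (intro powr_mono2) auto
      finally show "(2*D/R)^N \<le> (2*r) powr log 2 (2*D/R)" .
    qed
    finally show "cmod (taylor_polynomial f \<zeta> N z) \<le> B * (2*r) powr log 2 (2*D/R)" .
  qed
qed

section \<open>Property \<open>\<Omega>\<close>-tilde at every point of a bounded domain\<close>

lemma taylor_polynomial_seminorm_split:
  assumes R: "0 < R" "R \<le> D" and M: "cball \<zeta> R \<subseteq> M" "K \<subseteq> cball \<zeta> D"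
    and f: "f \<in> holo_space M" and bound: "\<forall>z\<in>cball \<zeta> R. cmod (f z) \<le> B" and "0 < B" "1 \<le> r"
    and q: "\<And>h b. h \<in> holo_space M \<Longrightarrow> 0 < b \<Longrightarrow> (\<forall>z\<in>K. cmod (h z) \<le> b) \<Longrightarrow> q h \<le> C * b"
  shows "\<exists>h\<in>holo_space M. (\<forall>w\<in>ball \<zeta> (R/2). cmod (f w - h w) \<le> B / r) \<and>
           q h \<le> C * B * 2 powr log 2 (2*D/R) * r powr log 2 (2*D/R)"
proof -
  let ?\<mu> = "log 2 (2*D/R)"
  have "f holomorphic_on cball \<zeta> R" using f M holomorphic_on_subset unfolding holo_space_def by blast
  then obtain N
    where tail: "\<And>w. w \<in> ball \<zeta> (R/2) \<Longrightarrow> cmod (f w - taylor_polynomial f \<zeta> N w) \<le> B / r"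
    and poly: "\<And>z. z \<in> cball \<zeta> D \<Longrightarrow> cmod (taylor_polynomial f \<zeta> N z) \<le> B * (2*r) powr ?\<mu>"
    using taylor_polynomial_approximation[OF _ R bound \<open>1 \<le> r\<close>] by metis
  have h: "taylor_polynomial f \<zeta> N \<in> holo_space M"
    unfolding holo_space_def by (simp add: taylor_polynomial_holomorphic)
  have "q (taylor_polynomial f \<zeta> N) \<le> C * (B * (2*r) powr ?\<mu>)"
  proof (rule q[OF h])
    show "0 < B * (2*r) powr ?\<mu>" using \<open>0 < B\<close> \<open>1 \<le> r\<close> by simp
    show "\<forall>z\<in>K. cmod (taylor_polynomial f \<zeta> N z) \<le> B * (2*r) powr ?\<mu>" using poly M(2) by blast
  qed
  also have "\<dots> = C * B * 2 powr ?\<mu> * r powr ?\<mu>" by (simp add: powr_mult)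
  finally show ?thesis using h tail by blast
qed

lemma omega_tilde_at_splitting:
  assumes fs: "fund_seminorm_sys M p" and R: "0 < R" "R \<le> D"
    and M: "cball \<zeta> R \<subseteq> M" "M \<subseteq> cball \<zeta> D" and "0 < C1"
    and unit: "\<forall>f\<in>holo_space M. p k1 f \<le> 1 \<longrightarrow> (\<forall>z\<in>cball \<zeta> R. cmod (f z) \<le> C1)"
  shows "\<exists>C>0. \<forall>r>0. \<forall>f\<in>holo_space M. p k1 f \<le> 1 \<longrightarrow>
           (\<exists>g\<in>holo_space M. \<exists>h\<in>holo_space M. f = (\<lambda>w. g w + h w) \<and>
              (\<forall>w\<in>ball \<zeta> (R/2). cmod (g w) \<le> C / r) \<and> p k h \<le> r powr (log 2 (2*D/R) + 1))"
proof -
  let ?\<mu> = "log 2 (2*D/R)"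
  obtain K Ck where K: "K \<subseteq> M"
    and sup_bound: "\<And>f B. f \<in> holo_space M \<Longrightarrow> 0 < B \<Longrightarrow> (\<forall>z\<in>K. cmod (f z) \<le> B) \<Longrightarrow> p k f \<le> Ck * B"
    using fund_seminorm_sys_le_sup[OF fs, where k=k] by metis
  define r0 where "r0 = max 1 (Ck * C1 * 2 powr ?\<mu>)"
  have r0: "1 \<le> r0" "Ck * C1 * 2 powr ?\<mu> \<le> r0" unfolding r0_def by auto
  have decomposition: "\<exists>g\<in>holo_space M. \<exists>h\<in>holo_space M. f = (\<lambda>w. g w + h w) \<and>
          (\<forall>w\<in>ball \<zeta> (R/2). cmod (g w) \<le> C1 * r0 / r) \<and> p k h \<le> r powr (?\<mu> + 1)"
    if r: "0 < r" and f: "f \<in> holo_space M" "p k1 f \<le> 1" for r f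
  proof (cases "r \<le> r0")
    case True
    have "ball \<zeta> (R/2) \<subseteq> cball \<zeta> R" using R by auto
    moreover have "C1 \<le> C1 * r0 / r" using True r \<open>0 < C1\<close> by (simp add: field_simps)
    ultimately have "\<forall>w\<in>ball \<zeta> (R/2). cmod (f w) \<le> C1 * r0 / r"
      using unit f by (meson order_trans subsetD)
    moreover have "p k (\<lambda>z. 0) \<le> r powr (?\<mu> + 1)"
      using seminorm_on_zero[OF fund_seminorm_sys_seminorm[OF fs]] by simp
    ultimately show ?thesis
      by (intro bexI[of _ f] bexI[of _ "\<lambda>z. 0"] conjI) (use f holo_space_zero in auto)
  next
    case False
    have bound: "\<forall>z\<in>cball \<zeta> R. cmod (f z) \<le> C1" using unit f by blast
    have "1 \<le> r" using False r0 by simp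
    obtain h where h: "h \<in> holo_space M" and tail: "\<forall>w\<in>ball \<zeta> (R/2). cmod (f w - h w) \<le> C1 / r"
      and ph: "p k h \<le> Ck * C1 * 2 powr ?\<mu> * r powr ?\<mu>"
      using taylor_polynomial_seminorm_split[where q = "p k", OF R M(1) order_trans[OF K M(2)] f(1) bound
          \<open>0 < C1\<close> \<open>1 \<le> r\<close> sup_bound] by blast
    note ph
    also have "\<dots> \<le> r * r powr ?\<mu>" using False r0 by (intro mult_right_mono) auto
    also have "\<dots> = r powr (?\<mu> + 1)" using r by (simp add: powr_add)
    finally have "p k h \<le> r powr (?\<mu> + 1)" .
    moreover have "C1 / r \<le> C1 * r0 / r"
      using r0 \<open>0 < C1\<close> r by (intro divide_right_mono) (auto simp: mult_le_cancel_left1)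
    then have "\<forall>w\<in>ball \<zeta> (R/2). cmod (f w - h w) \<le> C1 * r0 / r" using tail by (meson order_trans)
    moreover have "(\<lambda>w. f w - h w) \<in> holo_space M"
      using f h unfolding holo_space_def by (auto intro!: holomorphic_intros)
    ultimately show ?thesis
      by (intro bexI[of _ "\<lambda>w. f w - h w"] bexI[of _ h] conjI) (use h in auto)
  qed
  show ?thesis
  proof (intro exI[of _ "C1 * r0"] conjI allI impI ballI)
    show "0 < C1 * r0" using \<open>0 < C1\<close> r0 by simp
  qed (fact decomposition)
qed

lemma omega_tilde_at_if_bounded:
  assumes fs: "fund_seminorm_sys M p" and "open M" "bounded M" "\<zeta> \<in> M"
  shows "omega_tilde_at_wrt M \<zeta> p"
proof -
  obtain R where R: "0 < R" "cball \<zeta> R \<subseteq> M" using assms open_contains_cball by blast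
  obtain D where D: "R \<le> D" "M \<subseteq> cball \<zeta> D"
  proof -
    obtain e where "M \<subseteq> ball \<zeta> e" using bounded_subset_ballD[OF \<open>bounded M\<close>] by blast
    moreover have "ball \<zeta> e \<subseteq> cball \<zeta> (max R e)"
      using subset_cball[of e "max R e" \<zeta>] ball_subset_cball by force
    ultimately show thesis using that[of "max R e"] by auto
  qed
  obtain k1 C1 where C1: "0 < C1" and unit: "\<And>f s z. f \<in> holo_space M \<Longrightarrow> 0 < s \<Longrightarrow> p k1 f \<le> s
      \<Longrightarrow> z \<in> cball \<zeta> R \<Longrightarrow> cmod (f z) \<le> C1 * s"
    using sup_le_fund_seminorm_sys[OF fs compact_cball R(2)] by metis
  have "\<forall>f\<in>holo_space M. p k1 f \<le> 1 \<longrightarrow> (\<forall>z\<in>cball \<zeta> R. cmod (f z) \<le> C1)"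
    using unit[of _ 1] by simp
  note splitting = omega_tilde_at_splitting[OF fs R(1) D(1) R(2) D(2) C1 this]
  have "cball \<zeta> (R/2) \<subseteq> M" using R subset_cball[of "R/2" R \<zeta>] by auto
  moreover have "1 \<le> 2*D/R" using R D by (simp add: field_simps)
  then have "0 \<le> log 2 (2*D/R)" by simp
  then have "0 < log 2 (2*D/R) + 1" by linarith
  ultimately show ?thesis unfolding omega_tilde_at_wrt_def using R(1) splitting
    by (intro exI[of _ "R/2"] conjI exI[of _ k1] exI[of _ "log 2 (2*D/R) + 1"]) auto
qed

section \<open>Circle integrals of \<open>\<phi>(z) z\<^sup>n\<close> on the punctured disc\<close>

lemma circlepath_moment_integrable:
  assumes "\<phi> holomorphic_on ball 0 1 - {0}" "0 < s" "s < 1"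
  shows "(\<lambda>z. \<phi> z * z^n) contour_integrable_on circlepath 0 s"
  using assms by (intro contour_integral_circlepath_eq(1)[OF open_ball _ _ order_refl])
    (auto intro!: holomorphic_intros)

lemma circlepath_moment_radius_independent:
  assumes "\<phi> holomorphic_on ball 0 1 - {0}" "0 < s1" "s1 < 1" "0 < s2" "s2 < 1"
  shows "contour_integral (circlepath 0 s1) (\<lambda>z. \<phi> z * z^n) =
         contour_integral (circlepath 0 s2) (\<lambda>z. \<phi> z * z^n)"
proof -
  have hol: "(\<lambda>z. \<phi> z * z^n) holomorphic_on ball 0 1 - {0}" using assms(1) by (intro holomorphic_intros)
  have cball: "cball 0 s \<subseteq> ball (0::complex) 1" if "s < 1" for s
    using that by (simp add: cball_subset_ball_iff)
  show ?thesis
  proof (cases "s1 \<le> s2")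
    case True
    show ?thesis
      by (rule contour_integral_circlepath_eq(3)[OF open_ball hol \<open>0 < s1\<close> True
            cball[OF \<open>s2 < 1\<close>], symmetric])
  next
    case False
    show ?thesis
      by (rule contour_integral_circlepath_eq(3)[OF open_ball hol \<open>0 < s2\<close> _
            cball[OF \<open>s1 < 1\<close>]]) (use False in simp)
  qed
qed

lemma circlepath_moment_bound:
  assumes "\<phi> holomorphic_on ball 0 1 - {0}" "0 < s" "s < 1"
    and bound: "\<And>z. cmod z = s \<Longrightarrow> cmod (\<phi> z) \<le> B"
  shows "cmod (contour_integral (circlepath 0 s) (\<lambda>z. \<phi> z * z^n)) \<le> 2*pi * B * s^(n+1)"
proof -
  have "0 \<le> B" using order_trans[OF norm_ge_zero bound[of "of_real s"]] \<open>0 < s\<close> by simp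
  have "cmod (contour_integral (circlepath 0 s) (\<lambda>z. \<phi> z * z^n)) \<le> B * s^n * (2 * pi * s)"
  proof (rule has_contour_integral_bound_circlepath)
    show "((\<lambda>z. \<phi> z * z^n) has_contour_integral contour_integral (circlepath 0 s) (\<lambda>z. \<phi> z * z^n))
          (circlepath 0 s)"
      using circlepath_moment_integrable[OF assms(1-3)] by (rule has_contour_integral_integral)
    show "cmod (\<phi> z * z^n) \<le> B * s^n" if "cmod (z - 0) = s" for z
      using bound[of z] that \<open>0 < s\<close> by (simp add: norm_mult norm_power mult_right_mono)
  qed (use \<open>0 < s\<close> \<open>0 \<le> B\<close> in auto)
  then show ?thesis by (simp add: algebra_simps)
qed

lemma circlepath_moment_inverse_power:
  assumes "0 < s"
  shows "contour_integral (circlepath 0 s) (\<lambda>z. c / z^(n+1) * z^n) = 2 * pi * \<i> * c"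
proof -
  have "contour_integral (circlepath 0 s) (\<lambda>z. c / z^(n+1) * z^n) =
        contour_integral (circlepath 0 s) (\<lambda>z. c / (z - 0))"
    using assms by (intro contour_integral_eq) auto
  also have "\<dots> = 2 * pi * \<i> * c"
    using Cauchy_integral_circlepath_simple[of "\<lambda>u. c" 0 s 0] assms contour_integral_unique
    by (simp add: mult.commute)
  finally show ?thesis .
qed

lemma inverse_power_decomposition_bound:
  assumes g: "g holomorphic_on ball 0 1 - {0}" and h: "h holomorphic_on ball 0 1 - {0}"
    and split: "\<And>z. z \<in> ball 0 1 - {0} \<Longrightarrow> c / z^(n+1) = g z + h z"
    and s: "0 < s" "s < 1" and \<rho>: "0 < \<rho>" "\<rho> < 1"
    and G: "\<And>z. cmod z = s \<Longrightarrow> cmod (g z) \<le> G" and H: "\<And>z. cmod z = \<rho> \<Longrightarrow> cmod (h z) \<le> H"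
  shows "cmod c \<le> G * s^(n+1) + H * \<rho>^(n+1)"
proof -
  let ?I = "\<lambda>s \<phi>. contour_integral (circlepath 0 s) (\<lambda>z::complex. \<phi> z * z^n)"
  have "2 * pi * \<i> * c = ?I s (\<lambda>z. c / z^(n+1))"
    using circlepath_moment_inverse_power[OF s(1)] by simp
  also have "\<dots> = contour_integral (circlepath 0 s) (\<lambda>z. g z * z^n + h z * z^n)"
  proof (rule contour_integral_eq)
    fix z assume "z \<in> path_image (circlepath 0 s)"
    then have "z \<in> ball 0 1 - {0}" using s by auto
    then show "c / z^(n+1) * z^n = g z * z^n + h z * z^n" by (simp only: split distrib_right)
  qed
  also have "\<dots> = ?I s g + ?I s h"
    using circlepath_moment_integrable[OF g s] circlepath_moment_integrable[OF h s]
    by (rule contour_integral_add)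
  also have "?I s h = ?I \<rho> h" using circlepath_moment_radius_independent[OF h s \<rho>] .
  finally have "2 * pi * cmod c = cmod (?I s g + ?I \<rho> h)"
    by (metis norm_mult norm_ii mult_1_right norm_of_real abs_of_nonneg pi_ge_zero
        mult_nonneg_nonneg zero_le_numeral norm_numeral mult.assoc)
  also have "\<dots> \<le> cmod (?I s g) + cmod (?I \<rho> h)" by (rule norm_triangle_ineq)
  also have "\<dots> \<le> 2*pi * G * s^(n+1) + 2*pi * H * \<rho>^(n+1)"
    using circlepath_moment_bound[OF g s G] circlepath_moment_bound[OF h \<rho> H] by (rule add_mono)
  finally have "2 * pi * cmod c \<le> 2 * pi * (G * s^(n+1) + H * \<rho>^(n+1))"
    by (simp add: algebra_simps)
  then show ?thesis by (rule mult_left_le_imp_le) simp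
qed

section \<open>Failure of property \<open>\<Omega>\<close>-tilde on the punctured disc\<close>

text \<open>Property \<open>\<Omega>\<close>-tilde restricted to the functions \<open>c z\<^sup>-\<^sup>n\<^sup>-\<^sup>1\<close> with \<open>|c| \<le> a\<^sup>n\<^sup>+\<^sup>1\<close>
  (which lie in \<open>U\<^sub>k\<^sub>1\<close> for suitable \<open>a\<close>), with the balls \<open>U\<^sub>k\<^sub>0\<close> and \<open>U\<^sub>k\<close> replaced by the
  sup norms on the circles \<open>|z| = 1/2\<close> and \<open>|z| = \<rho>\<close>.\<close>

definition inverse_powers_split :: "real \<Rightarrow> real \<Rightarrow> real \<Rightarrow> real \<Rightarrow> real \<Rightarrow> bool" where
  "inverse_powers_split a lam \<rho> A Q \<longleftrightarrow>
     (\<forall>r>0. \<forall>n c. cmod c \<le> a^(n+1) \<longrightarrow>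
       (\<exists>g h. g holomorphic_on ball 0 1 - {0} \<and> h holomorphic_on ball 0 1 - {0} \<and>
          (\<forall>z\<in>ball 0 1 - {0}. c / z^(n+1) = g z + h z) \<and>
          (\<forall>z. cmod z = 1/2 \<longrightarrow> cmod (g z) \<le> A / r) \<and>
          (\<forall>z. cmod z = \<rho> \<longrightarrow> cmod (h z) \<le> Q * r powr lam)))"

lemma inverse_power_holo_space: "(\<lambda>z. c / z^(n+1)) \<in> holo_space (ball 0 1 - {0})"
  unfolding holo_space_def by (auto intro!: holomorphic_intros)

lemma inverse_powers_in_unit_ball:
  assumes fs: "fund_seminorm_sys (ball 0 1 - {0}) p"
  obtains a where "0 < a" "a \<le> 1/2" "\<And>n c. cmod c \<le> a^(n+1) \<Longrightarrow> p k (\<lambda>z. c / z^(n+1)) \<le> 1"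
proof -
  obtain K B0 where K: "compact K" "K \<subseteq> ball 0 1 - {0}" and K_bound: "\<And>f B. f \<in> holo_space (ball 0 1 - {0})
      \<Longrightarrow> 0 < B \<Longrightarrow> (\<forall>z\<in>K. cmod (f z) \<le> B) \<Longrightarrow> p k f \<le> B0 * B"
    using fund_seminorm_sys_le_sup[OF fs, where k=k] by metis
  obtain d where d: "0 < d" "\<And>z. z \<in> K \<Longrightarrow> d \<le> cmod z"
    using separate_point_closed[OF compact_imp_closed[OF K(1)], of 0] K(2) by force
  define B where "B = max 1 B0"
  define a where "a = min d (1/2) / B"
  have B: "1 \<le> B" "B0 \<le> B" unfolding B_def by auto
  have a: "0 < a" "a \<le> 1/2" using d B by (auto simp: a_def field_simps)
  have "p k (\<lambda>z. c / z^(n+1)) \<le> 1" if c: "cmod c \<le> a^(n+1)" for n c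
  proof -
    have bound: "cmod (c / z^(n+1)) \<le> 1 / B" if z: "z \<in> K" for z
    proof -
      have "a * B \<le> cmod z" using d(2)[OF z] B by (simp add: a_def)
      have "cmod c * B \<le> cmod c * B^(n+1)"
        using B by (intro mult_left_mono) (simp_all add: power_increasing[of 1 "n+1" B, simplified])
      also have "\<dots> \<le> a^(n+1) * B^(n+1)" using c B by (intro mult_right_mono) simp_all
      also have "\<dots> = (a * B)^(n+1)" by (simp add: power_mult_distrib)
      also have "\<dots> \<le> cmod z^(n+1)" using \<open>a * B \<le> cmod z\<close> a B by (intro power_mono) simp_all
      finally have "cmod c * B \<le> cmod z^(n+1)" .
      moreover have "0 < cmod z" using z K(2) by auto
      ultimately show ?thesis using B by (simp add: norm_divide norm_mult norm_power field_simps)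
    qed
    have "p k (\<lambda>z. c / z^(n+1)) \<le> B0 * (1/B)"
      by (rule K_bound[OF inverse_power_holo_space]) (use B bound in auto)
    also have "\<dots> \<le> 1" using B by simp
    finally show ?thesis .
  qed
  then show ?thesis using a that by blast
qed

lemma omega_tilde_imp_inverse_powers_split:
  assumes fs: "fund_seminorm_sys (ball 0 1 - {0}) p" and om: "omega_tilde_wrt (ball 0 1 - {0}) p"
  obtains a lam where "0 < a" "a \<le> 1/2" "0 < lam"
    "\<And>\<rho>. 0 < \<rho> \<Longrightarrow> \<rho> < 1 \<Longrightarrow> \<exists>A>0. \<exists>Q. inverse_powers_split a lam \<rho> A Q"
proof -
  let ?M = "ball 0 1 - {0} :: complex set"
  have sphere: "sphere 0 s \<subseteq> ?M" if "0 < s" "s < 1" for s using that by auto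
  obtain k0 A0 where A0: "0 < A0" and g_bound: "\<And>f s z. f \<in> holo_space ?M \<Longrightarrow> 0 < s
      \<Longrightarrow> p k0 f \<le> s \<Longrightarrow> z \<in> sphere 0 (1/2) \<Longrightarrow> cmod (f z) \<le> A0 * s"
    using sup_le_fund_seminorm_sys[OF fs compact_sphere sphere[of "1/2", simplified]] by metis
  obtain k1 lam where lam: "0 < lam" and split: "\<forall>k>k1. \<exists>C>0. \<forall>r>0.
      \<forall>f\<in>holo_space ?M. p k1 f \<le> 1 \<longrightarrow> (\<exists>g\<in>holo_space ?M. \<exists>h\<in>holo_space ?M.
         f = (\<lambda>z. g z + h z) \<and> p k0 g \<le> C / r \<and> p k h \<le> r powr lam)"
    using om[unfolded omega_tilde_wrt_def, THEN spec[of _ k0]] by blast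
  obtain a where a: "0 < a" "a \<le> 1/2" and unit: "\<And>n c. cmod c \<le> a^(n+1) \<Longrightarrow> p k1 (\<lambda>z. c / z^(n+1)) \<le> 1"
    using inverse_powers_in_unit_ball[OF fs] by metis
  show ?thesis
  proof (rule that[OF a lam])
    fix \<rho> :: real assume \<rho>: "0 < \<rho>" "\<rho> < 1"
    obtain k' Q where h_bound: "\<And>f s z. f \<in> holo_space ?M \<Longrightarrow> 0 < s \<Longrightarrow> p k' f \<le> s
        \<Longrightarrow> z \<in> sphere 0 \<rho> \<Longrightarrow> cmod (f z) \<le> Q * s"
      using sup_le_fund_seminorm_sys[OF fs compact_sphere sphere[OF \<rho>]] by metis
    define k where "k = max (Suc k1) k'"
    have "k1 < k" "k' \<le> k" unfolding k_def by auto
    then obtain C where C: "0 < C" and split_k: "\<forall>r>0. \<forall>f\<in>holo_space ?M. p k1 f \<le> 1 \<longrightarrow>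
        (\<exists>g\<in>holo_space ?M. \<exists>h\<in>holo_space ?M. f = (\<lambda>z. g z + h z) \<and> p k0 g \<le> C / r \<and>
           p k h \<le> r powr lam)"
      using split by blast
    have "inverse_powers_split a lam \<rho> (A0 * C) Q"
      unfolding inverse_powers_split_def
    proof (intro allI impI)
      fix r :: real and n c assume r: "0 < r" and c: "cmod c \<le> a^(n+1)"
      obtain g h where gh: "g \<in> holo_space ?M" "h \<in> holo_space ?M"
        and f: "(\<lambda>z. c / z^(n+1)) = (\<lambda>z. g z + h z)"
        and pg: "p k0 g \<le> C / r" and ph: "p k h \<le> r powr lam"
        using split_k[rule_format, OF r inverse_power_holo_space unit[OF c]] by blast
      have "p k' h \<le> r powr lam" using fund_seminorm_sys_mono[OF fs gh(2) \<open>k' \<le> k\<close>] ph by simp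
      show "\<exists>g h. g holomorphic_on ?M \<and> h holomorphic_on ?M \<and>
          (\<forall>z\<in>?M. c / z^(n+1) = g z + h z) \<and>
          (\<forall>z. cmod z = 1/2 \<longrightarrow> cmod (g z) \<le> A0 * C / r) \<and>
          (\<forall>z. cmod z = \<rho> \<longrightarrow> cmod (h z) \<le> Q * r powr lam)"
      proof (rule exI[of _ g], rule exI[of _ h], intro conjI allI ballI impI)
        show "g holomorphic_on ?M" "h holomorphic_on ?M" using gh unfolding holo_space_def by auto
        show "c / z^(n+1) = g z + h z" for z using fun_cong[OF f, of z] by simp
        show "cmod (g z) \<le> A0 * C / r" if "cmod z = 1/2" for z
          using g_bound[OF gh(1) _ pg, of z] that C r by simp
        show "cmod (h z) \<le> Q * r powr lam" if "cmod z = \<rho>" for z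
          using h_bound[OF gh(2) _ \<open>p k' h \<le> r powr lam\<close>, of z] that r by simp
      qed
    qed
    then show "\<exists>A>0. \<exists>Q. inverse_powers_split a lam \<rho> A Q" using mult_pos_pos[OF A0 C] by blast
  qed
qed

text \<open>The radius \<open>\<rho> = a (2a)\<^sup>\<lambda> / 2\<close> is chosen so that \<open>r\<^sup>\<lambda> \<rho>\<^sup>n\<^sup>+\<^sup>1\<close> decays like
  \<open>(a/2)\<^sup>n\<^sup>+\<^sup>1\<close> when \<open>r \<sim> (2a)\<^sup>-\<^sup>n\<^sup>-\<^sup>1\<close>.\<close>

lemma inverse_powers_split_growth:
  assumes a: "0 < a" and A: "0 < A" and \<rho>: "a * (2*a) powr lam / 2 < 1"
    and split: "inverse_powers_split a lam (a * (2*a) powr lam / 2) A Q"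
  shows "2^(n+1) \<le> 2 * Q * (2*A) powr lam"
proof -
  define \<rho> where "\<rho> = a * (2*a) powr lam / 2"
  define X where "X = 1 / (2*a)"
  define r where "r = 2 * A * X^(n+1)"
  have X: "0 < X" "X powr lam * (2*a) powr lam = 1"
    using a by (simp_all add: X_def powr_mult[symmetric])
  have r: "0 < r" using A X by (simp add: r_def)
  have "0 < \<rho>" "\<rho> < 1" using a \<rho> by (simp_all add: \<rho>_def)
  have norm_c: "cmod (of_real (a^(n+1)) :: complex) = a^(n+1)"
    using a by (simp only: norm_of_real abs_of_pos zero_less_power)
  obtain g h where g: "g holomorphic_on ball 0 1 - {0}" and h: "h holomorphic_on ball 0 1 - {0}"
    and eq: "\<forall>z\<in>ball 0 1 - {0}. of_real (a^(n+1)) / z^(n+1) = g z + h z"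
    and G: "\<forall>z. cmod z = 1/2 \<longrightarrow> cmod (g z) \<le> A / r"
    and H: "\<forall>z. cmod z = \<rho> \<longrightarrow> cmod (h z) \<le> Q * r powr lam"
    using split[folded \<rho>_def, unfolded inverse_powers_split_def, rule_format, OF r eq_refl[OF norm_c]]
    by blast
  have "cmod (of_real (a^(n+1)) :: complex) \<le> A / r * (1/2)^(n+1) + Q * r powr lam * \<rho>^(n+1)"
    by (rule inverse_power_decomposition_bound[OF g h _ _ _ \<open>0 < \<rho>\<close> \<open>\<rho> < 1\<close>])
      (use eq G H in auto)
  moreover have "A / r * (1/2)^(n+1) = a^(n+1) / 2"
    using A a by (simp add: r_def X_def power_divide field_simps)
  moreover have "Q * r powr lam * \<rho>^(n+1) = Q * (2*A) powr lam * (a/2)^(n+1)"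
  proof -
    have "r powr lam = (2*A) powr lam * (X powr lam)^(n+1)"
      using A X by (simp add: r_def powr_mult powr_realpow[symmetric] powr_powr powr_power mult.commute)
    moreover have "\<rho>^(n+1) * (X powr lam)^(n+1) = (a/2)^(n+1)"
      using X unfolding \<rho>_def power_mult_distrib[symmetric] by (simp add: field_simps)
    ultimately show ?thesis by (metis mult.assoc mult.commute)
  qed
  ultimately have "a^(n+1) / 2 \<le> Q * (2*A) powr lam * (a/2)^(n+1)" using norm_c by linarith
  then have "a^(n+1) * 2^(n+1) \<le> a^(n+1) * (2 * Q * (2*A) powr lam)"
    by (simp add: power_divide field_simps)
  then show ?thesis using a by simp
qed

lemma inverse_powers_split_impossible:
  assumes a: "0 < a" "a \<le> 1/2" and lam: "0 < lam"
    and split: "\<And>\<rho>. 0 < \<rho> \<Longrightarrow> \<rho> < 1 \<Longrightarrow> \<exists>A>0. \<exists>Q. inverse_powers_split a lam \<rho> A Q"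
  shows False
proof -
  have "(2*a) powr lam \<le> 1" using a lam by (intro powr_le1) auto
  then have "a * (2*a) powr lam \<le> a" using a by (simp add: mult_left_le)
  moreover have "0 < a * (2*a) powr lam" using a by simp
  ultimately have \<rho>: "0 < a * (2*a) powr lam / 2" "a * (2*a) powr lam / 2 < 1" using a by linarith+
  then obtain A Q where "0 < A" "inverse_powers_split a lam (a * (2*a) powr lam / 2) A Q"
    using split by blast
  note growth = inverse_powers_split_growth[OF a(1) this(1) \<rho>(2) this(2)]
  obtain n where "2 * Q * (2*A) powr lam < 2^n" using real_arch_pow[of 2] by auto
  moreover have "(2::real)^n \<le> 2^(n+1)" by simp
  ultimately show False using growth[of n] by linarith
qed

lemma not_omega_tilde_punctured_disc:
  assumes "fund_seminorm_sys (ball 0 1 - {0}) p"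
  shows "\<not> omega_tilde_wrt (ball 0 1 - {0}) p"
proof
  assume "omega_tilde_wrt (ball 0 1 - {0}) p"
  then obtain a lam where "0 < a" "a \<le> 1/2" "0 < lam"
    "\<And>\<rho>. 0 < \<rho> \<Longrightarrow> \<rho> < 1 \<Longrightarrow> \<exists>A>0. \<exists>Q. inverse_powers_split a lam \<rho> A Q"
    using omega_tilde_imp_inverse_powers_split[OF assms] by blast
  then show False by (rule inverse_powers_split_impossible)
qed

theorem mainTheorem6:
  shows "(\<forall>\<zeta>\<in>ball 0 1 - {0}. \<forall>p. fund_norm_sys (ball 0 1 - {0}) p \<longrightarrow>
            omega_tilde_at_wrt (ball 0 1 - {0}) \<zeta> p) \<and>
         (\<forall>p. fund_seminorm_sys (ball 0 1 - {0}) p \<longrightarrow>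
            \<not> omega_tilde_wrt (ball 0 1 - {0}) p)"
proof (intro conjI ballI allI impI)
  fix \<zeta> :: complex and p assume "\<zeta> \<in> ball 0 1 - {0}" "fund_norm_sys (ball 0 1 - {0}) p"
  then show "omega_tilde_at_wrt (ball 0 1 - {0}) \<zeta> p"
    by (intro omega_tilde_at_if_bounded) (auto simp: fund_norm_sys_def)
next
  fix p assume "fund_seminorm_sys (ball 0 1 - {0}) p"
  then show "\<not> omega_tilde_wrt (ball 0 1 - {0}) p" by (rule not_omega_tilde_punctured_disc)
qed

end
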